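(* Let $\ket{\psi_\mathcal{A}}$ be an antisymmetric vector state in $\mathbb{C}^d\otimes\mathbb{C}^d$ with Schmidt rank strictly larger than two. Then for every $0<p\leq 1/(d_\mathcal{S}+1)$, the state $\sigma = p\,|\psi_\mathcal{A}\rangle\langle\psi_\mathcal{A}| + (1-p)\,P_\mathcal{S}/d_\mathcal{S}$ is PPT entangled.
   Context: $V$ is the swap operator, $P_\mathcal{S}=(\mathbb{1}+V)/2$ and $P_\mathcal{A}=(\mathbb{1}-V)/2$ are the projectors onto the symmetric and antisymmetric subspaces of $\mathbb{C}^d\otimes\mathbb{C}^d$ (with $\mathbb{1}$ the identity operator); $d_\mathcal{S}=d(d+1)/2$. A vector $\ket{\psi_\mathcal{A}}$ is antisymmetric if $P_\mathcal{A}\ket{\psi_\mathcal{A}}=\ket{\psi_\mathcal{A}}$. PPT means the partial transpose is positive semidefinite. *)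

theory Defs
  imports "HOL-Analysis.Analysis"
begin

text \<open>Conventions: the local Hilbert space C^d is complex^'n with d = CARD('n);
  C^d (x) C^d is complex^('n \<times> 'n), with basis vector (i,j) = e_i (x) e_j.\<close>

definition smat :: "complex \<Rightarrow> complex^'m::finite^'k::finite \<Rightarrow> complex^'m^'k" where
  "smat c A = (\<chi> a b. c * A $ a $ b)"

definition swap_op :: "complex^('n::finite \<times> 'n)^('n \<times> 'n)" where
  "swap_op = (\<chi> a b. if b = prod.swap a then 1 else 0)"

definition proj_sym :: "complex^('n::finite \<times> 'n)^('n \<times> 'n)" where
  "proj_sym = smat (1/2) (mat 1 + swap_op)"

definition proj_antisym :: "complex^('n::finite \<times> 'n)^('n \<times> 'n)" where
  "proj_antisym = smat (1/2) (mat 1 - swap_op)"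

definition dim_sym :: "'n::finite itself \<Rightarrow> real" where
  "dim_sym _ = real CARD('n) * (real CARD('n) + 1) / 2"

definition antisymmetric_vec :: "complex^('n::finite \<times> 'n) \<Rightarrow> bool" where
  "antisymmetric_vec \<psi> \<longleftrightarrow> proj_antisym *v \<psi> = \<psi>"

definition schmidt_rank :: "complex^('n::finite \<times> 'n) \<Rightarrow> nat" where
  "schmidt_rank \<psi> = rank (\<chi> i j. \<psi> $ (i, j) :: complex^'n^'n)"

definition ketbra :: "complex^'m::finite \<Rightarrow> complex^'m^'m" where
  "ketbra \<psi> = (\<chi> a b. \<psi> $ a * cnj (\<psi> $ b))"

definition psd :: "complex^'m::finite^'m \<Rightarrow> bool" where
  "psd A \<longleftrightarrow> (\<forall>v. let q = (\<Sum>a\<in>UNIV. \<Sum>b\<in>UNIV. cnj (v $ a) * A $ a $ b * v $ b)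
                     in Im q = 0 \<and> 0 \<le> Re q)"

definition density :: "complex^'m::finite^'m \<Rightarrow> bool" where
  "density A \<longleftrightarrow> psd A \<and> trace A = 1"

definition partial_transpose ::
  "complex^('n::finite \<times> 'n)^('n \<times> 'n) \<Rightarrow> complex^('n \<times> 'n)^('n \<times> 'n)" where
  "partial_transpose A = (\<chi> a b. A $ (fst a, snd b) $ (fst b, snd a))"

definition PPT :: "complex^('n::finite \<times> 'n)^('n \<times> 'n) \<Rightarrow> bool" where
  "PPT A \<longleftrightarrow> psd (partial_transpose A)"

definition tensor_op ::
  "complex^'n::finite^'n \<Rightarrow> complex^'n^'n \<Rightarrow> complex^('n \<times> 'n)^('n \<times> 'n)" where
  "tensor_op R T = (\<chi> a b. R $ fst a $ fst b * T $ snd a $ snd b)"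

definition separable :: "complex^('n::finite \<times> 'n)^('n \<times> 'n) \<Rightarrow> bool" where
  "separable A \<longleftrightarrow> (\<exists>(m::nat) (w::nat \<Rightarrow> real) R T.
      (\<forall>k<m. 0 \<le> w k \<and> density (R k) \<and> density (T k)) \<and> (\<Sum>k<m. w k) = 1 \<and>
      A = (\<Sum>k<m. smat (complex_of_real (w k)) (tensor_op (R k) (T k))))"

definition entangled :: "complex^('n::finite \<times> 'n)^('n \<times> 'n) \<Rightarrow> bool" where
  "entangled A \<longleftrightarrow> density A \<and> \<not> separable A"

end

theory Submission
  imports Defs
begin

(* PPT: the partial transpose of P_S is (1 + |Phi><Phi|)/2 >= 1/2, where Phi = sum_i e_i (x) e_i,
   whereas the partial transpose of |psi><psi| is >= -1/2 for an antisymmetric unit vector psi,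
   because an antisymmetric coefficient matrix of Hilbert-Schmidt norm 1 has operator norm at
   most 1/sqrt 2. So sigma is PPT as soon as p <= (1 - p)/d_S, i.e. p <= 1/(d_S + 1).
   Entanglement: P_S vanishes on antisymmetric vectors, so <z|sigma|z> = 0 for every antisymmetric
   z orthogonal to psi. A separable sigma is a positive combination of projectors onto product
   vectors x (x) y, each of which is then orthogonal to all such z; hence the antisymmetric part
   of x (x) y is a multiple of psi. Since <psi|sigma|psi> = p > 0, some x (x) y has nonzero
   overlap with psi, which forces psi to be proportional to x (x) y - y (x) x, of Schmidt rank
   at most 2. *)

section \<open>Complex sums\<close>

lemma cnj_mult_self: "cnj z * z = complex_of_real ((cmod z)^2)"
  by (simp add: complex_mult_cnj cmod_power2 mult.commute del: of_real_power)

lemma Cauchy_Schwarz_complex_sum: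
  fixes a b :: "'i \<Rightarrow> complex"
  shows "(cmod (\<Sum>k\<in>I. a k * b k))^2 \<le> (\<Sum>k\<in>I. (cmod (a k))^2) * (\<Sum>k\<in>I. (cmod (b k))^2)"
proof -
  have "cmod (\<Sum>k\<in>I. a k * b k) \<le> (\<Sum>k\<in>I. cmod (a k) * cmod (b k))"
    by (rule order_trans[OF norm_sum]) (simp add: norm_mult)
  then have "(cmod (\<Sum>k\<in>I. a k * b k))^2 \<le> (\<Sum>k\<in>I. cmod (a k) * cmod (b k))^2"
    by (rule power_mono) simp
  also have "\<dots> \<le> (\<Sum>k\<in>I. (cmod (a k))^2) * (\<Sum>k\<in>I. (cmod (b k))^2)"
    by (rule Cauchy_Schwarz_ineq_sum)
  finally show ?thesis .
qed

lemma Lagrange_identity_complex: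
  fixes a b :: "'i \<Rightarrow> complex"
  shows "(\<Sum>i\<in>I. \<Sum>l\<in>I. (cmod (a i * b l - a l * b i))^2)
       = 2 * ((\<Sum>i\<in>I. (cmod (a i))^2) * (\<Sum>i\<in>I. (cmod (b i))^2) - (cmod (\<Sum>i\<in>I. a i * cnj (b i)))^2)"
    (is "?L = 2 * (?A * ?B - (cmod ?S)^2)")
proof -
  have expand: "cnj (a i * b l - a l * b i) * (a i * b l - a l * b i)
      = (cnj (a i) * a i) * (cnj (b l) * b l) + (cnj (a l) * a l) * (cnj (b i) * b i)
        - cnj (a i * b l) * (a l * b i) - cnj (a l * b i) * (a i * b l)" for i l
    by (simp add: algebra_simps)
  have cross: "(\<Sum>i\<in>I. \<Sum>l\<in>I. cnj (a i * b l) * (a l * b i)) = cnj ?S * ?S"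
    by (simp add: sum_product mult_ac) (rule sum.swap)
  have cross': "(\<Sum>i\<in>I. \<Sum>l\<in>I. cnj (a l * b i) * (a i * b l))
      = (\<Sum>i\<in>I. \<Sum>l\<in>I. cnj (a i * b l) * (a l * b i))"
    by (rule sum.swap)
  have squares: "(\<Sum>i\<in>I. \<Sum>l\<in>I. (cnj (a l) * a l) * (cnj (b i) * b i))
      = (\<Sum>i\<in>I. \<Sum>l\<in>I. (cnj (a i) * a i) * (cnj (b l) * b l))"
    by (rule sum.swap)
  have "complex_of_real ?L = (\<Sum>i\<in>I. \<Sum>l\<in>I. cnj (a i * b l - a l * b i) * (a i * b l - a l * b i))"
    by (simp only: of_real_sum cnj_mult_self)
  also have "\<dots> = 2 * ((\<Sum>i\<in>I. cnj (a i) * a i) * (\<Sum>l\<in>I. cnj (b l) * b l)) - 2 * (cnj ?S * ?S)"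
  proof -
    have "(\<Sum>i\<in>I. \<Sum>l\<in>I. cnj (a i * b l - a l * b i) * (a i * b l - a l * b i))
      = (\<Sum>i\<in>I. \<Sum>l\<in>I. (cnj (a i) * a i) * (cnj (b l) * b l))
        + (\<Sum>i\<in>I. \<Sum>l\<in>I. (cnj (a l) * a l) * (cnj (b i) * b i))
        - (\<Sum>i\<in>I. \<Sum>l\<in>I. cnj (a i * b l) * (a l * b i))
        - (\<Sum>i\<in>I. \<Sum>l\<in>I. cnj (a l * b i) * (a i * b l))"
      by (simp only: expand sum.distrib sum_subtractf)
    also have "\<dots> = 2 * (\<Sum>i\<in>I. \<Sum>l\<in>I. (cnj (a i) * a i) * (cnj (b l) * b l)) - 2 * (cnj ?S * ?S)"
      by (simp only: cross cross' squares mult_2 diff_diff_eq)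
    finally show ?thesis by (simp only: sum_product)
  qed
  also have "\<dots> = complex_of_real (2 * (?A * ?B - (cmod ?S)^2))"
    by (simp only: cnj_mult_self of_real_sum) (simp add: algebra_simps del: of_real_power)
  finally show ?thesis by (simp only: of_real_eq_iff)
qed

lemma Re_mult_cnj_ge: "- ((cmod a)^2 + (cmod b)^2) / 2 \<le> Re (a * cnj b)"
proof -
  have "- cmod (a * cnj b) \<le> Re (a * cnj b)" using abs_Re_le_cmod[of "a * cnj b"] by linarith
  moreover have "cmod a * cmod b \<le> ((cmod a)^2 + (cmod b)^2) / 2"
    using sum_squares_bound[of "cmod a" "cmod b"] by (simp add: mult.assoc)
  ultimately show ?thesis by (simp add: norm_mult)
qed

lemma sum_UNIV_prod: "(\<Sum>p\<in>(UNIV::('a::finite \<times> 'b::finite) set). g p) = (\<Sum>i\<in>UNIV. \<Sum>j\<in>UNIV. g (i, j))"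
  by (simp add: sum.cartesian_product)

lemma sum_prod_swap: "(\<Sum>a\<in>UNIV. f (prod.swap a)) = (\<Sum>a\<in>(UNIV::('a::finite \<times> 'a) set). f a)"
  by (rule sum.reindex_bij_witness[of _ prod.swap prod.swap]) auto

lemma antisymmetric_sum_antisymmetrize:
  fixes \<Psi> z :: "'i \<Rightarrow> 'i \<Rightarrow> complex"
  assumes "\<And>i l. \<Psi> l i = - \<Psi> i l"
  shows "2 * (\<Sum>i\<in>I. \<Sum>l\<in>I. \<Psi> i l * z i l) = (\<Sum>i\<in>I. \<Sum>l\<in>I. \<Psi> i l * (z i l - z l i))"
proof -
  have "\<Psi> i l * z l i = - (\<Psi> l i * z l i)" for i l
    using assms[of l i] by simp
  then have "(\<Sum>l\<in>I. \<Sum>i\<in>I. \<Psi> i l * z l i) = (\<Sum>l\<in>I. \<Sum>i\<in>I. - (\<Psi> l i * z l i))"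
    by (intro sum.cong refl)
  moreover have "(\<Sum>i\<in>I. \<Sum>l\<in>I. \<Psi> i l * z l i) = (\<Sum>l\<in>I. \<Sum>i\<in>I. \<Psi> i l * z l i)"
    by (rule sum.swap)
  ultimately have "(\<Sum>i\<in>I. \<Sum>l\<in>I. \<Psi> i l * z l i) = - (\<Sum>i\<in>I. \<Sum>l\<in>I. \<Psi> i l * z i l)"
    by (simp add: sum_negf)
  then show ?thesis by (simp add: right_diff_distrib sum_subtractf)
qed

lemma antisymmetric_form_diag_eq_0:
  fixes \<Psi> :: "'i \<Rightarrow> 'i \<Rightarrow> complex"
  assumes "\<And>i l. \<Psi> l i = - \<Psi> i l"
  shows "(\<Sum>i\<in>I. \<Sum>l\<in>I. \<Psi> i l * (w i * w l)) = 0"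
proof -
  have "2 * (\<Sum>i\<in>I. \<Sum>l\<in>I. \<Psi> i l * (w i * w l))
      = (\<Sum>i\<in>I. \<Sum>l\<in>I. \<Psi> i l * (w i * w l - w l * w i))"
    by (rule antisymmetric_sum_antisymmetrize[OF assms])
  then show ?thesis by simp
qed

lemma antisymmetric_matrix_bound:
  fixes \<Psi> :: "'i \<Rightarrow> 'i \<Rightarrow> complex" and w :: "'i \<Rightarrow> complex"
  assumes anti: "\<And>i l. \<Psi> l i = - \<Psi> i l"
  shows "(\<Sum>l\<in>I. (cmod (\<Sum>i\<in>I. w i * \<Psi> i l))^2)
       \<le> (\<Sum>i\<in>I. \<Sum>l\<in>I. (cmod (\<Psi> i l))^2) * (\<Sum>i\<in>I. (cmod (w i))^2) / 2"
proof -
  \<comment> \<open>With \<open>u = \<Psi>\<^sup>T w\<close> and \<open>z\<^sub>i\<^sub>l = w\<^sub>i cnj u\<^sub>l\<close>, antisymmetry gives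
     \<open>2 |u|\<^sup>2 = \<Sum> \<Psi>\<^sub>i\<^sub>l (z\<^sub>i\<^sub>l - z\<^sub>l\<^sub>i)\<close>, and since \<open>w\<^sup>T \<Psi> w = 0\<close>
     Lagrange's identity evaluates \<open>|z - z\<^sup>T|\<^sup>2 = 2 |w|\<^sup>2 |u|\<^sup>2\<close>;
     Cauchy-Schwarz then yields \<open>|u|\<^sup>2 \<le> |\<Psi>|\<^sup>2 |w|\<^sup>2 / 2\<close>.\<close>
  define u where "u l = (\<Sum>i\<in>I. w i * \<Psi> i l)" for l
  define N where "N = (\<Sum>l\<in>I. (cmod (u l))^2)"
  define z where "z i l = w i * cnj (u l)" for i l
  have "cnj (u l) * u l = (\<Sum>i\<in>I. \<Psi> i l * z i l)" for l
  proof -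
    have "cnj (u l) * u l = cnj (u l) * (\<Sum>i\<in>I. w i * \<Psi> i l)" by (simp add: u_def)
    then show ?thesis by (simp add: z_def sum_distrib_left mult_ac)
  qed
  then have "complex_of_real N = (\<Sum>l\<in>I. \<Sum>i\<in>I. \<Psi> i l * z i l)"
    by (simp add: N_def cnj_mult_self del: of_real_power)
  also have "\<dots> = (\<Sum>i\<in>I. \<Sum>l\<in>I. \<Psi> i l * z i l)" by (rule sum.swap)
  finally have "2 * complex_of_real N = (\<Sum>i\<in>I. \<Sum>l\<in>I. \<Psi> i l * (z i l - z l i))"
    by (simp add: antisymmetric_sum_antisymmetrize[OF anti])
  then have "(cmod (2 * complex_of_real N))^2
      \<le> (\<Sum>i\<in>I. \<Sum>l\<in>I. (cmod (\<Psi> i l))^2) * (\<Sum>i\<in>I. \<Sum>l\<in>I. (cmod (z i l - z l i))^2)"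
    using Cauchy_Schwarz_complex_sum[of "\<lambda>(i, l). \<Psi> i l" "\<lambda>(i, l). z i l - z l i" "I \<times> I"]
    by (simp add: sum.cartesian_product case_prod_beta)
  moreover have "(cmod (2 * complex_of_real N))^2 = 4 * N^2"
    by (simp add: norm_mult power_mult_distrib)
  moreover have "(\<Sum>l\<in>I. w l * u l) = 0"
    using antisymmetric_form_diag_eq_0[OF anti, where w = w and I = I]
    by (simp add: u_def sum_distrib_left mult_ac)
  then have "(\<Sum>i\<in>I. \<Sum>l\<in>I. (cmod (z i l - z l i))^2) = 2 * ((\<Sum>i\<in>I. (cmod (w i))^2) * N)"
    using Lagrange_identity_complex[where a = w and b = "\<lambda>l. cnj (u l)" and I = I]
    by (simp add: z_def N_def)
  ultimately have "N * N \<le> N * ((\<Sum>i\<in>I. \<Sum>l\<in>I. (cmod (\<Psi> i l))^2) * (\<Sum>i\<in>I. (cmod (w i))^2) / 2)"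
    by (simp add: power2_eq_square algebra_simps)
  moreover have "N \<ge> 0" by (simp add: N_def sum_nonneg)
  ultimately have "N \<le> (\<Sum>i\<in>I. \<Sum>l\<in>I. (cmod (\<Psi> i l))^2) * (\<Sum>i\<in>I. (cmod (w i))^2) / 2"
    by (cases "N = 0") (auto simp: sum_nonneg mult_nonneg_nonneg)
  then show ?thesis by (simp add: N_def u_def)
qed

lemma sum_mult_cnj_transpose:
  fixes C :: "'j \<Rightarrow> 'j \<Rightarrow> complex"
  shows "Im (\<Sum>j\<in>J. \<Sum>l\<in>J. C j l * cnj (C l j)) = 0"
    and "- (\<Sum>j\<in>J. \<Sum>l\<in>J. (cmod (C j l))^2) \<le> Re (\<Sum>j\<in>J. \<Sum>l\<in>J. C j l * cnj (C l j))"
proof -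
  define S where "S = (\<Sum>j\<in>J. \<Sum>l\<in>J. C j l * cnj (C l j))"
  have "cnj S = (\<Sum>l\<in>J. \<Sum>j\<in>J. cnj (C j l) * C l j)"
    by (simp add: S_def sum.swap[where g = "\<lambda>j l. cnj (C j l) * C l j"])
  also have "\<dots> = S" by (simp add: S_def mult.commute)
  finally have "Im (cnj S) = Im S" by (rule arg_cong)
  then have "Im S = 0" by simp
  then show "Im (\<Sum>j\<in>J. \<Sum>l\<in>J. C j l * cnj (C l j)) = 0" unfolding S_def .
  have swap: "(\<Sum>j\<in>J. \<Sum>l\<in>J. (cmod (C l j))^2) = (\<Sum>j\<in>J. \<Sum>l\<in>J. (cmod (C j l))^2)"
    by (rule sum.swap)
  have "(\<Sum>j\<in>J. \<Sum>l\<in>J. - ((cmod (C j l))^2 + (cmod (C l j))^2) / 2)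
      = - ((\<Sum>j\<in>J. \<Sum>l\<in>J. (cmod (C j l))^2) + (\<Sum>j\<in>J. \<Sum>l\<in>J. (cmod (C l j))^2)) / 2"
    by (simp only: sum_divide_distrib[symmetric] sum_negf sum.distrib)
  also have "\<dots> = - (\<Sum>j\<in>J. \<Sum>l\<in>J. (cmod (C j l))^2)" by (simp add: swap)
  moreover have "(\<Sum>j\<in>J. \<Sum>l\<in>J. - ((cmod (C j l))^2 + (cmod (C l j))^2) / 2)
      \<le> Re (\<Sum>j\<in>J. \<Sum>l\<in>J. C j l * cnj (C l j))"
    unfolding Re_sum by (intro sum_mono Re_mult_cnj_ge)
  ultimately show "- (\<Sum>j\<in>J. \<Sum>l\<in>J. (cmod (C j l))^2) \<le> Re (\<Sum>j\<in>J. \<Sum>l\<in>J. C j l * cnj (C l j))"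
    by linarith
qed

section \<open>Inner product and quadratic forms\<close>

definition cinner :: "complex^'m::finite \<Rightarrow> complex^'m \<Rightarrow> complex" where
  "cinner x y = (\<Sum>a\<in>UNIV. cnj (x$a) * y$a)"

lemma cinner_add_left: "cinner (x + y) z = cinner x z + cinner y z"
  by (simp add: cinner_def distrib_right sum.distrib)

lemma cinner_add_right: "cinner z (x + y) = cinner z x + cinner z y"
  by (simp add: cinner_def distrib_left sum.distrib)

lemma cinner_diff_left: "cinner (x - y) z = cinner x z - cinner y z"
  by (simp add: cinner_def left_diff_distrib sum_subtractf)

lemma cinner_diff_right: "cinner z (x - y) = cinner z x - cinner z y"
  by (simp add: cinner_def right_diff_distrib sum_subtractf)

lemma cinner_scale_left: "cinner (c *s x) z = cnj c * cinner x z"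
  by (simp add: cinner_def sum_distrib_left mult_ac)

lemma cinner_scale_right: "cinner z (c *s x) = c * cinner z x"
  by (simp add: cinner_def sum_distrib_left mult_ac)

lemma cinner_commute: "cinner y x = cnj (cinner x y)"
  by (simp add: cinner_def mult.commute)

lemma cinner_axis: "cinner (axis a 1) y = y $ a"
proof -
  have "cnj (axis a 1 $ b) * y $ b = (if b = a then y $ a else 0)" for b
    by (simp add: axis_def)
  then show ?thesis by (simp add: cinner_def)
qed

lemma norm_vec_power2: "(norm x)^2 = (\<Sum>a\<in>UNIV. (norm (x$a))^2)"
  by (simp add: norm_vec_def L2_set_def sum_nonneg)

lemma cinner_self: "cinner x x = of_real ((norm x)^2)"
  by (simp add: cinner_def norm_vec_power2 cnj_mult_self del: of_real_power)

lemma cinner_self_eq_0: "cinner x x = 0 \<longleftrightarrow> x = 0"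
  by (simp add: cinner_self)

lemma mult_vec_axis: "(A *v axis b 1) $ a = A$a$b" for A :: "complex^'m::finite^'k::finite"
  by (simp add: matrix_vector_mult_def axis_def if_distrib cong: if_cong)

lemma smat_mult_vec: "smat c A *v y = c *s (A *v y)"
  by (simp add: smat_def matrix_vector_mult_def vec_eq_iff sum_distrib_left mult.assoc)

lemma ketbra_mult_vec: "ketbra u *v y = cinner u y *s u"
  by (simp add: ketbra_def matrix_vector_mult_def vec_eq_iff cinner_def sum_distrib_left mult_ac)

lemma ketbra_zero: "ketbra 0 = 0"
  by (simp add: ketbra_def vec_eq_iff)

lemma trace_smat: "trace (smat c A) = c * trace A"
  by (simp add: trace_def smat_def sum_distrib_left)

lemma trace_ketbra: "trace (ketbra u) = cinner u u"
  by (simp add: trace_def ketbra_def cinner_def mult.commute)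

definition qform :: "complex^'m::finite^'m \<Rightarrow> complex^'m \<Rightarrow> complex^'m \<Rightarrow> complex" where
  "qform A x y = cinner x (A *v y)"

lemma qform_add_left: "qform A (x + y) z = qform A x z + qform A y z"
  by (simp add: qform_def cinner_add_left)

lemma qform_add_right: "qform A z (x + y) = qform A z x + qform A z y"
  by (simp add: qform_def cinner_add_right matrix_vector_right_distrib)

lemma qform_scale_left: "qform A (c *s x) z = cnj c * qform A x z"
  by (simp add: qform_def cinner_scale_left)

lemma qform_scale_right: "qform A z (c *s x) = c * qform A z x"
  by (simp add: qform_def cinner_scale_right vector_scalar_commute)

lemma qform_axis: "qform A (axis a 1) (axis b 1) = A$a$b"
  by (simp add: qform_def cinner_axis mult_vec_axis)

lemma qform_expand:
  "qform A (x + t *s y) (x + t *s y) =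
     qform A x x + t * qform A x y + cnj t * qform A y x + (cnj t * t) * qform A y y"
  by (simp add: qform_add_left qform_add_right qform_scale_left qform_scale_right algebra_simps)

lemma qform_mat_zero: "qform 0 x y = 0"
  by (simp add: qform_def cinner_def)

lemma qform_mat_1: "qform (mat 1) x y = cinner x y"
  by (simp add: qform_def matrix_vector_mul_lid)

lemma qform_mat_add: "qform (A + B) x y = qform A x y + qform B x y"
  by (simp add: qform_def matrix_vector_mult_add_rdistrib cinner_add_right)

lemma qform_mat_diff: "qform (A - B) x y = qform A x y - qform B x y"
  by (simp add: qform_def matrix_vector_mult_diff_rdistrib cinner_diff_right)

lemma qform_mat_sum: "qform (\<Sum>i\<in>S. M i) x y = (\<Sum>i\<in>S. qform (M i) x y)"
  by (induct S rule: infinite_finite_induct) (auto simp: qform_mat_add qform_mat_zero)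

lemma qform_smat: "qform (smat c A) x y = c * qform A x y"
  by (simp add: qform_def smat_mult_vec cinner_scale_right)

lemma qform_ketbra_self: "qform (ketbra u) x x = of_real ((cmod (cinner u x))^2)"
  by (simp add: qform_def ketbra_mult_vec cinner_scale_right cinner_commute[of x u]
      complex_mult_cnj cmod_power2 del: of_real_power)

section \<open>Positive semidefinite matrices\<close>

lemma psd_iff_qform: "psd A \<longleftrightarrow> (\<forall>v. Im (qform A v v) = 0 \<and> 0 \<le> Re (qform A v v))"
  unfolding psd_def qform_def cinner_def matrix_vector_mult_def Let_def
  by (simp add: sum_distrib_left mult.assoc)

lemma psd_qform_real: "psd A \<Longrightarrow> qform A v v = of_real (Re (qform A v v))"
  by (simp add: psd_iff_qform complex_eq_iff)

lemma psd_qform_nonneg: "psd A \<Longrightarrow> 0 \<le> Re (qform A v v)"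
  by (simp add: psd_iff_qform)

lemma psd_add: "psd A \<Longrightarrow> psd B \<Longrightarrow> psd (A + B)"
  by (simp add: psd_iff_qform qform_mat_add)

lemma psd_smat: "0 \<le> c \<Longrightarrow> psd A \<Longrightarrow> psd (smat (of_real c) A)"
  by (simp add: psd_iff_qform qform_smat)

lemma psd_ketbra: "psd (ketbra u)"
  by (simp add: psd_iff_qform qform_ketbra_self del: of_real_power)

lemma psd_qform_commute:
  assumes "psd A" shows "qform A y x = cnj (qform A x y)"
proof -
  have real: "Im (qform A v v) = 0" for v using assms psd_iff_qform by blast
  have "Im (qform A x y + qform A y x) = 0"
    using real[of "x + 1 *s y"] real[of x] real[of y] qform_expand[of A x 1 y] by simp
  moreover have "Re (qform A x y - qform A y x) = 0"
    using real[of "x + \<i> *s y"] real[of x] real[of y] qform_expand[of A x "\<i>" y] by simp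
  ultimately show ?thesis by (simp add: complex_eq_iff)
qed

lemma psd_hermitian: "psd A \<Longrightarrow> A$b$a = cnj (A$a$b)"
  using psd_qform_commute[of A "axis a 1" "axis b 1"] by (simp add: qform_axis)

lemma psd_Cauchy_Schwarz:
  assumes "psd A"
  shows "(cmod (qform A x y))^2 \<le> Re (qform A x x) * Re (qform A y y)"
proof -
  define \<beta> where "\<beta> = qform A x y"
  obtain r where r: "qform A y y = of_real r" using psd_qform_real[OF assms] by blast
  have key: "0 \<le> Re (qform A x x) - 2 * s * (cmod \<beta>)^2 + s^2 * (cmod \<beta>)^2 * r" for s :: real
  proof -
    define t where "t = - of_real s * cnj \<beta>"
    have "0 \<le> Re (qform A (x + t *s y) (x + t *s y))"
      using psd_qform_nonneg[OF assms] by blast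
    also have "\<dots> = Re (qform A x x + t * \<beta> + cnj t * cnj \<beta> + (cnj t * t) * of_real r)"
      unfolding qform_expand psd_qform_commute[OF assms, of y x] r \<beta>_def ..
    also have "\<dots> = Re (qform A x x) - 2 * s * (cmod \<beta>)^2 + s^2 * (cmod \<beta>)^2 * r"
      by (simp add: t_def cmod_power2 del: Re_complex_of_real,
          simp add: power2_eq_square algebra_simps)
    finally show ?thesis .
  qed
  show ?thesis
  proof (cases "r = 0")
    case True
    have "(cmod \<beta>)^2 = 0"
    proof (rule ccontr)
      assume "(cmod \<beta>)^2 \<noteq> 0"
      then have "0 \<le> Re (qform A x x) - (Re (qform A x x) + 1)"
        using key[of "(Re (qform A x x) + 1) / (2 * (cmod \<beta>)^2)"] True by simp
      then show False by simp
    qed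
    then show ?thesis using True r \<beta>_def by simp
  next
    case False
    then have "r > 0" using psd_qform_nonneg[OF assms, of y] r by simp
    moreover have "0 \<le> Re (qform A x x) - (cmod \<beta>)^2 / r"
      using key[of "1 / r"] False by (simp add: field_simps power2_eq_square)
    ultimately show ?thesis using r \<beta>_def by (simp add: field_simps)
  qed
qed

lemma psd_qform_eq_0_imp_kernel:
  assumes "psd A" "qform A x x = 0" shows "A *v x = 0"
proof -
  have "(cmod (qform A (A *v x) x))^2 \<le> 0"
    using psd_Cauchy_Schwarz[OF assms(1), of "A *v x" x] assms(2) by simp
  then show ?thesis by (simp add: qform_def cinner_self_eq_0)
qed

lemma psd_peel_column:
  fixes A :: "complex^'m::finite^'m"
  assumes A: "psd A"
  obtains r where "psd (A - ketbra r)" and "\<And>a. (A - ketbra r)$a$s = 0"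
    and "\<And>a j. (\<forall>b. A$b$j = 0) \<Longrightarrow> (A - ketbra r)$a$j = 0"
proof (cases "A$s$s = 0")
  case True
  then have "A *v axis s 1 = 0"
    using psd_qform_eq_0_imp_kernel[OF A] by (simp add: qform_axis)
  then have "A$a$s = 0" for a using mult_vec_axis[of A s a] by simp
  with A show ?thesis by (intro that[of 0]) (auto simp: ketbra_zero)
next
  case False
  define \<alpha> where "\<alpha> = Re (A$s$s)"
  have Ass: "A$s$s = of_real \<alpha>"
    using psd_qform_real[OF A, of "axis s 1"] by (simp add: qform_axis \<alpha>_def)
  moreover have "\<alpha> \<ge> 0"
    using psd_qform_nonneg[OF A, of "axis s 1"] by (simp add: qform_axis \<alpha>_def)
  ultimately have \<alpha>_pos: "\<alpha> > 0" using False by force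
  \<comment> \<open>one Cholesky step: \<open>ketbra r\<close> agrees with \<open>A\<close> in row and column \<open>s\<close>\<close>
  define r :: "complex^'m" where "r = (\<chi> a. cnj (A$s$a) / of_real (sqrt \<alpha>))"
  have ketbra_r: "ketbra r $ a $ b = cnj (A$s$a) * A$s$b / of_real \<alpha>" for a b
  proof -
    have "(of_real (sqrt \<alpha>) * of_real (sqrt \<alpha>) :: complex) = of_real \<alpha>"
      using \<alpha>_pos by (simp flip: of_real_mult)
    then show ?thesis by (simp add: ketbra_def r_def)
  qed
  have cinner_r: "cinner r v = qform A (axis s 1) v / of_real (sqrt \<alpha>)" for v
    unfolding qform_def cinner_axis
    by (simp add: cinner_def r_def matrix_vector_mult_def sum_divide_distrib)
  have "psd (A - ketbra r)"
    unfolding psd_iff_qform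
  proof
    fix v
    have "(cmod (cinner r v))^2 = (cmod (qform A (axis s 1) v))^2 / \<alpha>"
      using \<alpha>_pos by (simp add: cinner_r norm_divide power_divide)
    also have "\<dots> \<le> Re (qform A v v)"
      using psd_Cauchy_Schwarz[OF A, of "axis s 1" v] \<alpha>_pos
      by (simp add: qform_axis \<alpha>_def divide_le_eq mult.commute)
    finally show "Im (qform (A - ketbra r) v v) = 0 \<and> 0 \<le> Re (qform (A - ketbra r) v v)"
      using A by (simp add: qform_mat_diff qform_ketbra_self psd_iff_qform del: of_real_power)
  qed
  moreover have "(A - ketbra r)$a$s = 0" for a
    using \<alpha>_pos psd_hermitian[OF A, of s a] by (simp add: ketbra_r Ass)
  moreover have "(A - ketbra r)$a$j = 0" if "\<forall>b. A$b$j = 0" for a j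
    using that by (simp add: ketbra_r)
  ultimately show ?thesis by (rule that)
qed

lemma psd_eq_sum_ketbra_on:
  fixes A :: "complex^'m::finite^'m"
  assumes "psd A" and "\<And>a j. j \<notin> S \<Longrightarrow> A$a$j = 0"
  shows "\<exists>f. A = (\<Sum>i\<in>S. ketbra (f i))"
  using finite[of S] assms
proof (induction S arbitrary: A rule: finite_induct)
  case empty
  then show ?case by (auto simp: vec_eq_iff)
next
  case (insert s S)
  obtain r where psd': "psd (A - ketbra r)" and col_s: "\<And>a. (A - ketbra r)$a$s = 0"
    and col_zero: "\<And>a j. (\<forall>b. A$b$j = 0) \<Longrightarrow> (A - ketbra r)$a$j = 0"
    using psd_peel_column[OF insert.prems(1)] by blast
  have "(A - ketbra r)$a$j = 0" if "j \<notin> S" for a j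
    using that col_s col_zero insert.prems(2) by (cases "j = s") auto
  then obtain f where f: "A - ketbra r = (\<Sum>i\<in>S. ketbra (f i))"
    using insert.IH psd' by blast
  have "(\<Sum>i\<in>S. ketbra ((f(s:=r)) i)) = (\<Sum>i\<in>S. ketbra (f i))"
    using insert.hyps(2) by (intro sum.cong) auto
  then have "(\<Sum>i\<in>insert s S. ketbra ((f(s:=r)) i)) = ketbra r + (\<Sum>i\<in>S. ketbra (f i))"
    using insert.hyps by simp
  also have "\<dots> = A" by (simp add: f[symmetric])
  finally show ?case by metis
qed

lemma psd_eq_sum_ketbra:
  fixes A :: "complex^'m::finite^'m"
  assumes "psd A" obtains f where "A = (\<Sum>i\<in>(UNIV::'m set). ketbra (f i))"
  using psd_eq_sum_ketbra_on[OF assms, of UNIV] that by auto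

lemma psd_family_eq_sum_ketbra:
  fixes R :: "nat \<Rightarrow> complex^'m::finite^'m"
  assumes "\<And>k. k < m \<Longrightarrow> psd (R k)"
  obtains F where "\<And>k. k < m \<Longrightarrow> R k = (\<Sum>i\<in>(UNIV::'m set). ketbra (F k i))"
proof -
  have "\<forall>k. \<exists>f. k < m \<longrightarrow> R k = (\<Sum>i\<in>(UNIV::'m set). ketbra (f i))"
    using assms psd_eq_sum_ketbra by metis
  then show thesis using choice that by metis
qed

section \<open>The symmetric and antisymmetric subspaces\<close>

lemma swap_op_mult_vec: "swap_op *v x = (\<chi> a. x $ prod.swap a)"
proof -
  have "\<And>a b. (if b = prod.swap a then 1 else 0) * x$b
      = (if b = prod.swap a then x$(prod.swap a) else 0)"
    by simp
  then show ?thesis by (simp add: swap_op_def matrix_vector_mult_def vec_eq_iff)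
qed

lemma proj_sym_mult_vec: "proj_sym *v x = (\<chi> a. (x$a + x$(prod.swap a)) / 2)"
  by (simp add: proj_sym_def smat_mult_vec matrix_vector_mult_add_rdistrib swap_op_mult_vec vec_eq_iff)

lemma proj_antisym_mult_vec: "proj_antisym *v x = (\<chi> a. (x$a - x$(prod.swap a)) / 2)"
  by (simp add: proj_antisym_def smat_mult_vec matrix_vector_mult_diff_rdistrib swap_op_mult_vec
      vec_eq_iff)

lemma antisymmetric_vec_iff: "antisymmetric_vec x \<longleftrightarrow> (\<forall>a. x$(prod.swap a) = - x$a)"
proof -
  have "(x$a - x$(prod.swap a)) / 2 = x$a \<longleftrightarrow> x$(prod.swap a) = - x$a" for a
    by (auto simp: field_simps) (simp add: eq_neg_iff_add_eq_0 add.commute)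
  then show ?thesis by (simp add: antisymmetric_vec_def proj_antisym_mult_vec vec_eq_iff)
qed

lemma antisymmetric_vec_proj_antisym: "antisymmetric_vec (proj_antisym *v u)"
  unfolding antisymmetric_vec_iff proj_antisym_mult_vec by (auto simp: diff_divide_distrib)

lemma antisymmetric_vec_diff_scale:
  "antisymmetric_vec a \<Longrightarrow> antisymmetric_vec b \<Longrightarrow> antisymmetric_vec (a - c *s b)"
  by (simp add: antisymmetric_vec_def matrix_vector_mult_diff_distrib vector_scalar_commute)

lemma proj_sym_antisymmetric_vec:
  assumes "antisymmetric_vec x" shows "proj_sym *v x = 0"
proof -
  have "x$(prod.swap a) = - x$a" for a using assms unfolding antisymmetric_vec_iff by blast
  then show ?thesis by (simp add: proj_sym_mult_vec vec_eq_iff)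
qed

lemma cinner_proj_antisym_left:
  assumes "antisymmetric_vec w"
  shows "cinner (proj_antisym *v u) w = cinner u w"
proof -
  have w: "w$(prod.swap a) = - w$a" for a using assms unfolding antisymmetric_vec_iff by blast
  have "(\<Sum>a\<in>UNIV. cnj (u$(prod.swap a)) * w$a)
      = (\<Sum>a\<in>UNIV. cnj (u$(prod.swap (prod.swap a))) * w$(prod.swap a))"
    by (rule sum_prod_swap[symmetric])
  also have "\<dots> = - cinner u w" by (simp add: w cinner_def sum_negf)
  finally have "(\<Sum>a\<in>UNIV. cnj (u$(prod.swap a)) * w$a) = - cinner u w" .
  then show ?thesis
    by (simp add: cinner_def proj_antisym_mult_vec diff_divide_distrib left_diff_distrib
        sum_subtractf flip: sum_divide_distrib)
qed

lemma qform_proj_sym_self: "qform proj_sym v v = cinner (proj_sym *v v) (proj_sym *v v)"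
proof -
  define S where "S = (\<Sum>a\<in>UNIV. cnj (v$a) * v$(prod.swap a))"
  have "cinner (proj_sym *v v) (proj_sym *v v) = (\<Sum>a\<in>UNIV. cnj (v$a) * v$a
      + cnj (v$(prod.swap a)) * v$(prod.swap a) + cnj (v$a) * v$(prod.swap a)
      + cnj (v$(prod.swap a)) * v$a) / 4"
    by (simp add: cinner_def proj_sym_mult_vec sum_divide_distrib algebra_simps)
  also have "\<dots> = (cinner v v + cinner v v + S + S) / 4"
    using sum_prod_swap[of "\<lambda>a. cnj (v$a) * v$a"] sum_prod_swap[of "\<lambda>a. cnj (v$(prod.swap a)) * v$a"]
    by (simp add: sum.distrib cinner_def S_def)
  also have "\<dots> = (cinner v v + S) / 2" by (simp add: field_simps)
  also have "\<dots> = qform proj_sym v v"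
    by (simp add: qform_def proj_sym_mult_vec cinner_def S_def distrib_left sum.distrib
        add_divide_distrib flip: sum_divide_distrib)
  finally show ?thesis by (rule sym)
qed

lemma qform_proj_sym_antisymmetric_vec: "antisymmetric_vec z \<Longrightarrow> qform proj_sym z z = 0"
  by (simp add: qform_def cinner_def proj_sym_antisymmetric_vec)

lemma psd_proj_sym: "psd proj_sym"
  unfolding psd_iff_qform qform_proj_sym_self cinner_self by simp

lemma trace_proj_sym: "trace (proj_sym :: complex^('n::finite \<times> 'n)^('n \<times> 'n)) = of_real (dim_sym TYPE('n))"
proof -
  have "(i = j \<and> j = i) = (i = j)" for i j :: 'n by auto
  then have "trace (proj_sym :: complex^('n \<times> 'n)^('n \<times> 'n))
      = (\<Sum>i\<in>(UNIV::'n set). \<Sum>j\<in>(UNIV::'n set). (1 + (if i = j then 1 else 0)) / 2)"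
    by (simp add: trace_def proj_sym_def smat_def swap_op_def mat_def sum_UNIV_prod)
  also have "\<dots> = (of_nat (CARD('n) * CARD('n)) + of_nat CARD('n)) / 2"
    by (simp add: sum.distrib add_divide_distrib flip: sum_divide_distrib) (simp add: distrib_left)
  also have "\<dots> = of_real (dim_sym TYPE('n))"
    by (simp add: dim_sym_def algebra_simps add_divide_distrib)
  finally show ?thesis .
qed

section \<open>Partial transposes\<close>

lemma partial_transpose_add: "partial_transpose (A + B) = partial_transpose A + partial_transpose B"
  by (simp add: partial_transpose_def vec_eq_iff)

lemma partial_transpose_smat: "partial_transpose (smat c A) = smat c (partial_transpose A)"
  by (simp add: partial_transpose_def smat_def vec_eq_iff)

lemma qform_partial_transpose_ketbra:
  fixes \<psi> v :: "complex^('n::finite \<times> 'n)"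
  shows "qform (partial_transpose (ketbra \<psi>)) v v =
    (\<Sum>j\<in>UNIV. \<Sum>l\<in>UNIV. (\<Sum>i\<in>UNIV. cnj (v$(i, j)) * \<psi>$(i, l)) * cnj (\<Sum>i\<in>UNIV. cnj (v$(i, l)) * \<psi>$(i, j)))"
proof -
  define T where "T i j k l = cnj (v$(i, j)) * (\<psi>$(i, l) * cnj (\<psi>$(k, j)) * v$(k, l))" for i j k l
  have "qform (partial_transpose (ketbra \<psi>)) v v = (\<Sum>i\<in>UNIV. \<Sum>j\<in>UNIV. \<Sum>k\<in>UNIV. \<Sum>l\<in>UNIV. T i j k l)"
    by (simp add: qform_def cinner_def matrix_vector_mult_def partial_transpose_def ketbra_def
        sum_UNIV_prod sum_distrib_left T_def)
  also have "\<dots> = (\<Sum>j\<in>UNIV. \<Sum>i\<in>UNIV. \<Sum>k\<in>UNIV. \<Sum>l\<in>UNIV. T i j k l)"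
    by (rule sum.swap)
  also have "\<dots> = (\<Sum>j\<in>UNIV. \<Sum>i\<in>UNIV. \<Sum>l\<in>UNIV. \<Sum>k\<in>UNIV. T i j k l)"
    by (intro sum.cong refl sum.swap)
  also have "\<dots> = (\<Sum>j\<in>UNIV. \<Sum>l\<in>UNIV. \<Sum>i\<in>UNIV. \<Sum>k\<in>UNIV. T i j k l)"
    by (intro sum.cong refl sum.swap)
  also have "\<dots> = (\<Sum>j\<in>UNIV. \<Sum>l\<in>UNIV. (\<Sum>i\<in>UNIV. cnj (v$(i, j)) * \<psi>$(i, l))
      * cnj (\<Sum>i\<in>UNIV. cnj (v$(i, l)) * \<psi>$(i, j)))"
    by (simp add: T_def sum_product mult_ac)
  finally show ?thesis .
qed

lemma qform_partial_transpose_ketbra_antisym: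
  fixes \<psi> v :: "complex^('n::finite \<times> 'n)"
  assumes "antisymmetric_vec \<psi>"
  shows "Im (qform (partial_transpose (ketbra \<psi>)) v v) = 0"
    and "- ((norm \<psi>)^2 * (norm v)^2 / 2) \<le> Re (qform (partial_transpose (ketbra \<psi>)) v v)"
proof -
  define C where "C j l = (\<Sum>i\<in>UNIV. cnj (v$(i, j)) * \<psi>$(i, l))" for j l
  have X: "qform (partial_transpose (ketbra \<psi>)) v v = (\<Sum>j\<in>UNIV. \<Sum>l\<in>UNIV. C j l * cnj (C l j))"
    unfolding C_def by (rule qform_partial_transpose_ketbra)
  then show "Im (qform (partial_transpose (ketbra \<psi>)) v v) = 0"
    by (simp only: sum_mult_cnj_transpose(1))
  have anti: "\<And>i l. \<psi>$(l, i) = - \<psi>$(i, l)"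
    using assms unfolding antisymmetric_vec_iff by (metis swap_simp)
  have "(\<Sum>l\<in>UNIV. (cmod (C j l))^2) \<le> (norm \<psi>)^2 * (\<Sum>i\<in>UNIV. (cmod (v$(i, j)))^2) / 2" for j
    using antisymmetric_matrix_bound[of "\<lambda>i l. \<psi>$(i, l)", OF anti, of "\<lambda>i. cnj (v$(i, j))" UNIV]
    by (simp add: C_def norm_vec_power2 sum_UNIV_prod)
  then have "(\<Sum>j\<in>UNIV. \<Sum>l\<in>UNIV. (cmod (C j l))^2)
      \<le> (\<Sum>j\<in>UNIV. (norm \<psi>)^2 * (\<Sum>i\<in>UNIV. (cmod (v$(i, j)))^2) / 2)"
    by (rule sum_mono)
  also have "\<dots> = (norm \<psi>)^2 * (norm v)^2 / 2"
    by (simp add: norm_vec_power2 sum_UNIV_prod sum.swap[where g = "\<lambda>i j. (cmod (v$(i, j)))^2"]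
        sum_distrib_left flip: sum_divide_distrib)
  finally have "(\<Sum>j\<in>UNIV. \<Sum>l\<in>UNIV. (cmod (C j l))^2) \<le> (norm \<psi>)^2 * (norm v)^2 / 2" .
  then show "- ((norm \<psi>)^2 * (norm v)^2 / 2) \<le> Re (qform (partial_transpose (ketbra \<psi>)) v v)"
    unfolding X using sum_mult_cnj_transpose(2)[of C UNIV] by linarith
qed

definition max_entangled_vec :: "complex^('n::finite \<times> 'n)" where
  "max_entangled_vec = (\<chi> a. if fst a = snd a then 1 else 0)"

lemma partial_transpose_proj_sym:
  "partial_transpose (proj_sym :: complex^('n::finite \<times> 'n)^('n \<times> 'n))
     = smat (1/2) (mat 1 + ketbra max_entangled_vec)"
  by (auto simp: vec_eq_iff partial_transpose_def proj_sym_def smat_def mat_def swap_op_def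
      ketbra_def max_entangled_vec_def)

lemma qform_partial_transpose_proj_sym:
  "qform (partial_transpose proj_sym) v v
     = of_real (((norm v)^2 + (cmod (cinner max_entangled_vec v))^2) / 2)"
  by (simp add: partial_transpose_proj_sym qform_smat qform_mat_add qform_ketbra_self qform_mat_1
      cinner_self del: of_real_power)

lemma PPT_antisym_ketbra_plus_proj_sym:
  fixes \<psi> :: "complex^('n::finite \<times> 'n)"
  assumes "norm \<psi> = 1" and "antisymmetric_vec \<psi>" and "0 \<le> p" and "p \<le> q"
  shows "PPT (smat (of_real p) (ketbra \<psi>) + smat (of_real q) proj_sym)"
  unfolding PPT_def psd_iff_qform
proof
  fix v :: "complex^('n \<times> 'n)"
  define X where "X = qform (partial_transpose (ketbra \<psi>)) v v"
  have "p * (- ((norm v)^2 / 2)) \<le> p * Re X"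
    using qform_partial_transpose_ketbra_antisym(2)[OF assms(2), of v] assms(1,3)
    by (intro mult_left_mono) (auto simp: X_def)
  moreover have "p * ((norm v)^2 / 2) \<le> q * (((norm v)^2 + (cmod (cinner max_entangled_vec v))^2) / 2)"
    using assms(3,4) by (intro mult_mono) auto
  moreover have "Im X = 0"
    using qform_partial_transpose_ketbra_antisym(1)[OF assms(2)] by (simp add: X_def)
  ultimately show "Im (qform (partial_transpose (smat (of_real p) (ketbra \<psi>) + smat (of_real q) proj_sym)) v v) = 0
      \<and> 0 \<le> Re (qform (partial_transpose (smat (of_real p) (ketbra \<psi>) + smat (of_real q) proj_sym)) v v)"
    by (simp add: partial_transpose_add partial_transpose_smat qform_mat_add qform_smat
        qform_partial_transpose_proj_sym X_def[symmetric] del: of_real_power)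
qed

section \<open>Product vectors and separability\<close>

definition tensor_vec :: "complex^'n::finite \<Rightarrow> complex^'n \<Rightarrow> complex^('n \<times> 'n)" where
  "tensor_vec x y = (\<chi> a. x$(fst a) * y$(snd a))"

lemma tensor_op_sum_ketbra:
  fixes f :: "'i::finite \<Rightarrow> complex^'n::finite" and g :: "'j::finite \<Rightarrow> complex^'n"
  shows "tensor_op (\<Sum>i\<in>UNIV. ketbra (f i)) (\<Sum>j\<in>UNIV. ketbra (g j))
       = (\<Sum>i\<in>UNIV. \<Sum>j\<in>UNIV. ketbra (tensor_vec (f i) (g j)))"
  by (simp add: vec_eq_iff tensor_op_def ketbra_def tensor_vec_def sum_product mult_ac)

lemma separable_qform_eq_sum_product:
  fixes A :: "complex^('n::finite \<times> 'n)^('n \<times> 'n)"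
  assumes "separable A"
  obtains I :: "(nat \<times> 'n \<times> 'n) set" and c x y where "finite I" and "\<And>t. t \<in> I \<Longrightarrow> 0 \<le> c t"
    and "\<And>z. qform A z z = of_real (\<Sum>t\<in>I. c t * (cmod (cinner (tensor_vec (x t) (y t)) z))^2)"
proof -
  obtain m and w :: "nat \<Rightarrow> real" and R T :: "nat \<Rightarrow> complex^'n^'n"
    where w: "\<forall>k<m. 0 \<le> w k \<and> density (R k) \<and> density (T k)"
    and A: "A = (\<Sum>k<m. smat (of_real (w k)) (tensor_op (R k) (T k)))"
    using assms unfolding separable_def by blast
  have "\<And>k. k < m \<Longrightarrow> psd (R k)" using w by (simp add: density_def)
  then obtain F where F: "\<And>k. k < m \<Longrightarrow> R k = (\<Sum>i\<in>(UNIV::'n set). ketbra (F k i))"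
    using psd_family_eq_sum_ketbra by blast
  have "\<And>k. k < m \<Longrightarrow> psd (T k)" using w by (simp add: density_def)
  then obtain G where G: "\<And>k. k < m \<Longrightarrow> T k = (\<Sum>j\<in>(UNIV::'n set). ketbra (G k j))"
    using psd_family_eq_sum_ketbra by blast
  define I :: "(nat \<times> 'n \<times> 'n) set" where "I = {..<m} \<times> UNIV \<times> UNIV"
  show thesis
  proof (rule that[of I "\<lambda>(k, _). w k" "\<lambda>(k, i, _). F k i" "\<lambda>(k, _, j). G k j"])
    fix z
    have "qform A z z = (\<Sum>k<m. of_real (w k) * (\<Sum>i\<in>UNIV. \<Sum>j\<in>UNIV.
            of_real ((cmod (cinner (tensor_vec (F k i) (G k j)) z))^2)))"
      by (simp add: A F G tensor_op_sum_ketbra qform_mat_sum qform_smat qform_ketbra_self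
          del: of_real_power)
    also have "\<dots> = of_real (\<Sum>(k, i, j)\<in>I. w k * (cmod (cinner (tensor_vec (F k i) (G k j)) z))^2)"
      by (simp add: I_def sum.cartesian_product sum_distrib_left case_prod_beta)
    finally show "qform A z z = of_real (\<Sum>t\<in>I. (case t of (k, _) \<Rightarrow> w k) *
        (cmod (cinner (tensor_vec (case t of (k, i, _) \<Rightarrow> F k i) (case t of (k, _, j) \<Rightarrow> G k j)) z))^2)"
      by (simp add: case_prod_beta)
  qed (use w in \<open>auto simp: I_def\<close>)
qed

lemma rank_antisym_outer_le_2:
  fixes x y :: "complex^'n::finite"
  shows "rank (\<chi> i j. c * (x$i * y$j - x$j * y$i) :: complex^'n^'n) \<le> 2"
proof -
  let ?M = "(\<chi> i j. c * (x$i * y$j - x$j * y$i) :: complex^'n^'n)"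
  have "rows ?M \<subseteq> vec.span {x, y}"
  proof
    fix r assume "r \<in> rows ?M"
    then obtain i where "r = row i ?M" by (auto simp: rows_def)
    then have "r = (c * x$i) *s y - (c * y$i) *s x"
      by (simp add: row_def vec_eq_iff algebra_simps)
    also have "\<dots> \<in> vec.span {x, y}"
      by (intro vec.span_diff vec.span_scale vec.span_base) auto
    finally show "r \<in> vec.span {x, y}" .
  qed
  then have "vec.dim (rows ?M) \<le> card {x, y}" by (rule vec.dim_le_card) simp
  also have "card {x, y} \<le> 2" by (cases "x = y") auto
  finally show ?thesis by (simp add: row_rank_def_gen)
qed

lemma proj_antisym_eq_scale_if_orthogonal:
  fixes \<psi> u :: "complex^('n::finite \<times> 'n)"
  assumes "antisymmetric_vec \<psi>" and "norm \<psi> = 1"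
    and orth: "\<And>w. antisymmetric_vec w \<Longrightarrow> cinner \<psi> w = 0 \<Longrightarrow> cinner u w = 0"
  shows "proj_antisym *v u = cinner \<psi> (proj_antisym *v u) *s \<psi>"
proof -
  define v where "v = proj_antisym *v u"
  define w where "w = v - cinner \<psi> v *s \<psi>"
  have \<psi>\<psi>: "cinner \<psi> \<psi> = 1" using assms(2) by (simp add: cinner_self)
  have w_antisym: "antisymmetric_vec w"
    unfolding w_def v_def by (intro antisymmetric_vec_diff_scale antisymmetric_vec_proj_antisym assms(1))
  have \<psi>w: "cinner \<psi> w = 0" by (simp add: w_def cinner_diff_right cinner_scale_right \<psi>\<psi>)
  have "cinner v w = 0"
    using orth[OF w_antisym \<psi>w] cinner_proj_antisym_left[OF w_antisym, of u] by (simp add: v_def)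
  moreover have "cinner w w = cinner v w - cnj (cinner \<psi> v) * cinner \<psi> w"
    by (subst (1) w_def) (simp only: cinner_diff_left cinner_scale_left)
  ultimately have "cinner w w = 0" by (simp add: \<psi>w)
  then show ?thesis by (simp add: cinner_self_eq_0 w_def v_def)
qed

lemma cinner_tensor_vec_antisym_eq_0:
  fixes \<psi> :: "complex^('n::finite \<times> 'n)" and x y :: "complex^'n"
  assumes anti: "antisymmetric_vec \<psi>" and "norm \<psi> = 1" and "schmidt_rank \<psi> > 2"
    and "\<And>w. antisymmetric_vec w \<Longrightarrow> cinner \<psi> w = 0 \<Longrightarrow> cinner (tensor_vec x y) w = 0"
  shows "cinner (tensor_vec x y) \<psi> = 0"
proof (rule ccontr)
  assume nonzero: "cinner (tensor_vec x y) \<psi> \<noteq> 0"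
  define v where "v = proj_antisym *v tensor_vec x y"
  define c where "c = cinner \<psi> v"
  have v: "v = c *s \<psi>"
    unfolding v_def c_def by (rule proj_antisym_eq_scale_if_orthogonal[OF assms(1,2,4)])
  have "cnj c = cinner (tensor_vec x y) \<psi>"
    using cinner_proj_antisym_left[OF anti, of "tensor_vec x y"]
    by (simp add: c_def cinner_commute[of \<psi>] v_def)
  with nonzero have "c \<noteq> 0" by auto
  have coeff: "\<psi>$(i, j) = (1 / (2 * c)) * (x$i * y$j - x$j * y$i)" for i j
  proof -
    have "v$(i, j) = c * \<psi>$(i, j)" using v by simp
    moreover have "v$(i, j) = (x$i * y$j - x$j * y$i) / 2"
      by (simp add: v_def proj_antisym_mult_vec tensor_vec_def)
    ultimately show ?thesis using \<open>c \<noteq> 0\<close> by (simp add: field_simps)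
  qed
  then have "(\<chi> i j. \<psi>$(i, j) :: complex^'n^'n) = (\<chi> i j. (1 / (2 * c)) * (x$i * y$j - x$j * y$i))"
    by (simp add: vec_eq_iff)
  then have "schmidt_rank \<psi> \<le> 2"
    unfolding schmidt_rank_def by (simp only: rank_antisym_outer_le_2)
  with assms(3) show False by simp
qed

lemma not_separable_if_vanishes_on_antisym_complement:
  fixes \<sigma> :: "complex^('n::finite \<times> 'n)^('n \<times> 'n)"
  assumes "antisymmetric_vec \<psi>" and "norm \<psi> = 1" and "schmidt_rank \<psi> > 2"
    and "qform \<sigma> \<psi> \<psi> \<noteq> 0"
    and vanishes: "\<And>z. antisymmetric_vec z \<Longrightarrow> cinner \<psi> z = 0 \<Longrightarrow> qform \<sigma> z z = 0"
  shows "\<not> separable \<sigma>"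
proof
  assume "separable \<sigma>"
  then obtain I :: "(nat \<times> 'n \<times> 'n) set" and c x y
    where I: "finite I" and c: "\<And>t. t \<in> I \<Longrightarrow> 0 \<le> c t"
    and \<sigma>: "\<And>z. qform \<sigma> z z = of_real (\<Sum>t\<in>I. c t * (cmod (cinner (tensor_vec (x t) (y t)) z))^2)"
    using separable_qform_eq_sum_product by blast
  have "(\<Sum>t\<in>I. c t * (cmod (cinner (tensor_vec (x t) (y t)) \<psi>))^2) \<noteq> 0"
    using assms(4) unfolding \<sigma> of_real_eq_0_iff .
  then obtain t where t: "t \<in> I" and nonzero: "c t * (cmod (cinner (tensor_vec (x t) (y t)) \<psi>))^2 \<noteq> 0"
    by (rule sum.not_neutral_contains_not_neutral)
  have "cinner (tensor_vec (x t) (y t)) z = 0" if "antisymmetric_vec z" "cinner \<psi> z = 0" for z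
  proof -
    have "(\<Sum>t\<in>I. c t * (cmod (cinner (tensor_vec (x t) (y t)) z))^2) = 0"
      using vanishes[OF that] unfolding \<sigma> of_real_eq_0_iff .
    then have "c t * (cmod (cinner (tensor_vec (x t) (y t)) z))^2 = 0"
      using I c t by (simp add: sum_nonneg_eq_0_iff)
    then show ?thesis using nonzero by simp
  qed
  then have "cinner (tensor_vec (x t) (y t)) \<psi> = 0"
    using cinner_tensor_vec_antisym_eq_0[OF assms(1-3)] by blast
  with nonzero show False by simp
qed

theorem mainTheorem4:
  fixes \<psi> :: "complex^('n::finite \<times> 'n)" and p :: real
  assumes "norm \<psi> = 1"
    and "antisymmetric_vec \<psi>"
    and "schmidt_rank \<psi> > 2"
    and "0 < p" and "p \<le> 1 / (dim_sym TYPE('n) + 1)"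
  shows "PPT (smat (complex_of_real p) (ketbra \<psi>)
              + smat (complex_of_real ((1 - p) / dim_sym TYPE('n))) proj_sym)
       \<and> entangled (smat (complex_of_real p) (ketbra \<psi>)
              + smat (complex_of_real ((1 - p) / dim_sym TYPE('n))) proj_sym)"
proof -
  define D where "D = dim_sym TYPE('n)"
  define q where "q = (1 - p) / D"
  define \<sigma> :: "complex^('n \<times> 'n)^('n \<times> 'n)"
    where "\<sigma> = smat (of_real p) (ketbra \<psi>) + smat (of_real q) proj_sym"
  have "D > 0" by (simp add: D_def dim_sym_def add_pos_pos)
  then have "p \<le> q" and "q * D = 1 - p"
    using assms(5) by (simp_all add: q_def D_def field_simps)
  have qform_\<sigma>: "qform \<sigma> z z = of_real p * of_real ((cmod (cinner \<psi> z))^2) + of_real q * qform proj_sym z z" for z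
    by (simp add: \<sigma>_def qform_mat_add qform_smat qform_ketbra_self del: of_real_power)
  have "PPT \<sigma>"
    unfolding \<sigma>_def using assms(1,2,4) \<open>p \<le> q\<close> by (intro PPT_antisym_ketbra_plus_proj_sym) auto
  moreover have "psd \<sigma>"
    unfolding \<sigma>_def using assms(4) \<open>p \<le> q\<close> by (intro psd_add psd_smat psd_ketbra psd_proj_sym) auto
  moreover have "trace \<sigma> = 1"
    using assms(1) \<open>q * D = 1 - p\<close>
    by (simp add: \<sigma>_def trace_add trace_smat trace_ketbra trace_proj_sym cinner_self flip: D_def of_real_mult)
  moreover have "\<not> separable \<sigma>"
  proof (rule not_separable_if_vanishes_on_antisym_complement[OF assms(2,1,3)])
    show "qform \<sigma> \<psi> \<psi> \<noteq> 0"
      using assms(1,2,4) by (simp add: qform_\<sigma> cinner_self qform_proj_sym_antisymmetric_vec)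
    show "qform \<sigma> z z = 0" if "antisymmetric_vec z" "cinner \<psi> z = 0" for z
      using that by (simp add: qform_\<sigma> qform_proj_sym_antisymmetric_vec)
  qed
  ultimately show ?thesis
    by (simp add: entangled_def density_def \<sigma>_def q_def D_def)
qed

end
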